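(* Let $\Psi\subset\mathrm{Cl}^+(3)$ be the following set of 20 spinors (forming an $A_4$ root system inside the $H_4$ root system $2I$), writing $e_{ij}=e_ie_j$ and $\sigma=\frac{1-\sqrt5}{2}$: $\pm1$; $\pm\tfrac12(\tau e_{12}+\sigma e_{13}+e_{23})$; $\pm\tfrac12(e_{12}-\tau e_{13}+\sigma e_{23})$; $\pm\tfrac12(\sigma e_{12}-e_{13}-\tau e_{23})$; and $\tfrac12(\epsilon_1+\epsilon_2B)$ for all signs $\epsilon_1,\epsilon_2\in\{\pm1\}$ and $B\in\{\tau e_{12}+\sigma e_{23},\ \sigma e_{13}+\tau e_{23},\ \sigma e_{12}-\tau e_{13}\}$. Let $C=2I\setminus\Psi$ (100 elements). Then both $\Psi$ and $C$ are invariant under the reflection group $A_4$ generated by the reflections $s_R(X)=-R\tilde XR$, $R\in\Psi$.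
   Context: $\mathrm{Cl}(3)$ is the real Clifford algebra of Euclidean $\mathbb{R}^3$ with orthonormal basis $e_1,e_2,e_3$ ($e_i^2=1$, $e_ie_j=-e_je_i$ for $i\neq j$). The even subalgebra $\mathrm{Cl}^+(3)$ is spanned by $1,e_2e_3,e_3e_1,e_1e_2$ (spinors). Reversal $\tilde{\ }$ reverses the order of vector factors. The spinor inner product $(R_1,R_2)=\tfrac12(R_1\tilde R_2+R_2\tilde R_1)$ makes $\mathrm{Cl}^+(3)$ a 4D Euclidean space with orthonormal basis $1,e_2e_3,e_3e_1,e_1e_2$; for a unit spinor $R$, $s_R(X)=-R\tilde XR$ is the reflection in the hyperplane orthogonal to $R$. Let $\tau=\frac{1+\sqrt5}{2}$. The $H_3$ simple roots are $a_1=e_2$, $a_2=\tfrac12(-\tau e_1-e_2-(\tau-1)e_3)$, $a_3=e_1$. The binary icosahedral group $2I$ is the set of all products of an even number of factors from $\{a_1,a_2,a_3\}$ (order 120); viewed as 120 vectors in the 4D spinor space it is the $H_4$ root system (600-cell). *)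

theory Defs
  imports Complex_Main
begin

type_synonym vec3 = "real \<times> real \<times> real"

text \<open>Spinors (elements of Cl+(3)) as coordinates w.r.t. the basis 1, e2e3, e3e1, e1e2.\<close>
datatype spinor = Sp (sc: real) (c23: real) (c31: real) (c12: real)

text \<open>Geometric product of two vectors (an even element): ab = a.b + a^b.\<close>
fun vmul :: "vec3 \<Rightarrow> vec3 \<Rightarrow> spinor" where
  "vmul (x1,x2,x3) (y1,y2,y3) =
     Sp (x1*y1 + x2*y2 + x3*y3) (x2*y3 - x3*y2) (x3*y1 - x1*y3) (x1*y2 - x2*y1)"

text \<open>Geometric product in Cl+(3), from e_i^2 = 1, e_i e_j = - e_j e_i.\<close>
fun smul :: "spinor \<Rightarrow> spinor \<Rightarrow> spinor" where
  "smul (Sp a v1 v2 v3) (Sp b w1 w2 w3) =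
     Sp (a*b - (v1*w1 + v2*w2 + v3*w3))
        (a*w1 + b*v1 - (v2*w3 - v3*w2))
        (a*w2 + b*v2 - (v3*w1 - v1*w3))
        (a*w3 + b*v3 - (v1*w2 - v2*w1))"

fun sadd :: "spinor \<Rightarrow> spinor \<Rightarrow> spinor" where
  "sadd (Sp a b c d) (Sp a' b' c' d') = Sp (a+a') (b+b') (c+c') (d+d')"

fun sscale :: "real \<Rightarrow> spinor \<Rightarrow> spinor" where
  "sscale r (Sp a b c d) = Sp (r*a) (r*b) (r*c) (r*d)"

text \<open>Reversal: reverses vector factors, so bivectors change sign.\<close>
fun srev :: "spinor \<Rightarrow> spinor" where
  "srev (Sp a b c d) = Sp a (-b) (-c) (-d)"

definition sone :: spinor where "sone = Sp 1 0 0 0"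

definition e1 :: vec3 where "e1 = (1,0,0)"
definition e2 :: vec3 where "e2 = (0,1,0)"
definition e3 :: vec3 where "e3 = (0,0,1)"

definition e12 :: spinor where "e12 = vmul e1 e2"
definition e13 :: spinor where "e13 = vmul e1 e3"
definition e23 :: spinor where "e23 = vmul e2 e3"

definition tau :: real where "tau = (1 + sqrt 5) / 2"
definition sigma :: real where "sigma = (1 - sqrt 5) / 2"

definition a1 :: vec3 where "a1 = e2"
definition a2 :: vec3 where "a2 = (- tau / 2, - 1 / 2, - (tau - 1) / 2)"
definition a3 :: vec3 where "a3 = e1"

text \<open>Binary icosahedral group 2I: all products of an even number (including zero)
  of factors from {a1,a2,a3}.\<close>
inductive_set twoI :: "spinor set" where
  one: "sone \<in> twoI"
| step: "\<lbrakk>x \<in> twoI; a \<in> {a1,a2,a3}; b \<in> {a1,a2,a3}\<rbrakk> \<Longrightarrow> smul x (vmul a b) \<in> twoI"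

definition sref :: "spinor \<Rightarrow> spinor \<Rightarrow> spinor" where
  "sref R X = sscale (-1) (smul (smul R (srev X)) R)"

definition Psi :: "spinor set" where
  "Psi =
     {sscale e sone | e. e \<in> {1, -1}}
   \<union> {sscale (e/2) (sadd (sadd (sscale tau e12) (sscale sigma e13)) e23) | e. e \<in> {1, -1}}
   \<union> {sscale (e/2) (sadd (sadd e12 (sscale (-tau) e13)) (sscale sigma e23)) | e. e \<in> {1, -1}}
   \<union> {sscale (e/2) (sadd (sadd (sscale sigma e12) (sscale (-1) e13)) (sscale (-tau) e23)) | e. e \<in> {1, -1}}
   \<union> {sscale (1/2) (sadd (sscale e1' sone) (sscale e2' B)) | e1' e2' B.
        e1' \<in> {1, -1} \<and> e2' \<in> {1, -1} \<and>
        B \<in> {sadd (sscale tau e12) (sscale sigma e23),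
              sadd (sscale sigma e13) (sscale tau e23),
              sadd (sscale sigma e12) (sscale (-tau) e13)}}"

definition Cset :: "spinor set" where "Cset = twoI - Psi"

text \<open>The reflection group generated by s_R, R in Psi (as the set of all finite
  compositions of generators; since each s_R is an involution this is the generated group).\<close>
inductive_set A4grp :: "(spinor \<Rightarrow> spinor) set" where
  idI: "id \<in> A4grp"
| compI: "\<lbrakk>g \<in> A4grp; R \<in> Psi\<rbrakk> \<Longrightarrow> sref R \<circ> g \<in> A4grp"

end

theory Submission
  imports Defs
begin

text \<open>
  Every element of \<open>\<Psi>\<close> is a product of an even number of simple roots, so
  \<open>\<Psi> \<subseteq> 2I\<close>; and as \<open>2I\<close> is a group closed under reversal and containing \<open>-1\<close>,
  every reflection \<open>s\<^sub>R\<close> with \<open>R \<in> 2I\<close> maps \<open>2I\<close> into itself. Each \<open>R \<in> \<Psi>\<close> is a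
  unit spinor, so \<open>s\<^sub>R\<close> is an involution, and an exact computation in \<open>\<int>[\<tau>]\<close> shows
  \<open>s\<^sub>R(\<Psi>) \<subseteq> \<Psi>\<close>; as \<open>s\<^bsub>-R\<^esub> = s\<^sub>R\<close>, \<open>s\<^sub>R(-X) = -s\<^sub>R(X)\<close> and \<open>\<Psi> = -\<Psi>\<close>, it suffices
  to compute \<open>s\<^sub>R(X)\<close> for \<open>R, X\<close> in a set of ten representatives of \<open>\<Psi>\<close> modulo sign.
  An involution mapping both \<open>2I\<close> and \<open>\<Psi>\<close> into themselves permutes \<open>\<Psi>\<close> and
  \<open>2I - \<Psi>\<close>, and the theorem follows by induction over products of reflections.
\<close>

lemma involution_image_eq:
  assumes "\<And>x. f (f x) = x" and "f ` S \<subseteq> S"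
  shows "f ` S = S"
proof
  show "S \<subseteq> f ` S"
  proof
    fix x assume "x \<in> S"
    then show "x \<in> f ` S" using assms by (metis image_eqI image_subset_iff)
  qed
qed (fact assms(2))

lemma involution_image_Diff_eq:
  assumes inv: "\<And>x. f (f x) = x" and "f ` T \<subseteq> T" and "f ` S \<subseteq> S"
  shows "f ` (T - S) = T - S"
proof (rule involution_image_eq [OF inv], rule image_subsetI)
  fix x assume x: "x \<in> T - S"
  have "f x \<notin> S"
  proof
    assume "f x \<in> S"
    then have "f (f x) \<in> S" using assms(3) by blast
    then show False using x inv by simp
  qed
  then show "f x \<in> T - S" using x assms(2) by blast
qed

lemma smul_assoc: "smul (smul x y) z = smul x (smul y z)"
  by (cases x; cases y; cases z) (simp add: algebra_simps)

lemma srev_smul: "srev (smul x y) = smul (srev y) (srev x)"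
  by (cases x; cases y) (simp add: algebra_simps)

lemma srev_sscale: "srev (sscale c x) = sscale c (srev x)"
  by (cases x) simp

lemma smul_sscale_left: "smul (sscale c x) y = sscale c (smul x y)"
  by (cases x; cases y) (simp add: algebra_simps)

lemma smul_sscale_right: "smul x (sscale c y) = sscale c (smul x y)"
  by (cases x; cases y) (simp add: algebra_simps)

lemma srev_srev [simp]: "srev (srev x) = x"
  by (cases x) simp

lemma sscale_sscale: "sscale c (sscale d x) = sscale (c * d) x"
  by (cases x) simp

lemma sscale_one [simp]: "sscale 1 x = x"
  by (cases x) simp

lemma sscale_cancel: "c \<noteq> 0 \<Longrightarrow> sscale c x = sscale c y \<longleftrightarrow> x = y"
  by (cases x; cases y) simp

lemma smul_sone_left [simp]: "smul sone x = x"
  by (cases x) (simp add: sone_def)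

lemma smul_sone_right [simp]: "smul x sone = x"
  by (cases x) (simp add: sone_def)

lemma srev_vmul: "srev (vmul a b) = vmul b a"
  by (cases a rule: prod_cases3; cases b rule: prod_cases3) (simp add: algebra_simps)

lemma smul_srev_commute: "smul (srev R) R = smul R (srev R)"
  by (cases R) (simp add: algebra_simps)

lemma sref_sscale_left: "sref (sscale c R) X = sscale (c * c) (sref R X)"
  by (simp add: sref_def smul_sscale_left smul_sscale_right sscale_sscale mult.commute)

lemma sref_sscale_right: "sref R (sscale c X) = sscale c (sref R X)"
  by (simp add: sref_def srev_sscale smul_sscale_left smul_sscale_right sscale_sscale mult.commute)

lemma smul_srev_sscale: "smul (sscale c R) (srev (sscale c R)) = sscale (c * c) (smul R (srev R))"
  by (simp add: srev_sscale smul_sscale_left smul_sscale_right sscale_sscale mult.commute)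

lemma sref_sref:
  assumes unit: "smul R (srev R) = sone"
  shows "sref R (sref R X) = X"
proof -
  have "sref R (sref R X) = smul (smul R (srev R)) (smul X (smul (srev R) R))"
    by (simp add: sref_def srev_sscale srev_smul smul_sscale_left smul_sscale_right
        sscale_sscale smul_assoc)
  then show ?thesis
    by (simp add: smul_srev_commute unit)
qed

section \<open>The binary icosahedral group\<close>

lemma vmul_twoI:
  assumes "a \<in> {a1, a2, a3}" and "b \<in> {a1, a2, a3}"
  shows "vmul a b \<in> twoI"
  using twoI.step [OF twoI.one assms] by simp

lemma smul_twoI:
  assumes "x \<in> twoI" and "y \<in> twoI"
  shows "smul x y \<in> twoI"
  using assms(2)
proof (induction y rule: twoI.induct)
  case one
  show ?case using assms(1) by simp
next
  case (step y a b)
  have "smul (smul x y) (vmul a b) \<in> twoI"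
    using twoI.step [OF step.IH step.hyps(2,3)] .
  then show ?case by (simp add: smul_assoc)
qed

lemma srev_twoI: "x \<in> twoI \<Longrightarrow> srev x \<in> twoI"
proof (induction x rule: twoI.induct)
  case one
  have "srev sone = sone" by (simp add: sone_def)
  then show ?case using twoI.one by simp
next
  case (step x a b)
  then show ?case by (simp add: srev_smul srev_vmul smul_twoI vmul_twoI)
qed

lemma minus_sone_twoI: "sscale (-1) sone \<in> twoI"
proof -
  have a1_a3: "vmul a1 a3 \<in> twoI" by (rule vmul_twoI) simp_all
  from a1_a3 a1_a3 have "smul (vmul a1 a3) (vmul a1 a3) \<in> twoI" by (rule smul_twoI)
  moreover have "smul (vmul a1 a3) (vmul a1 a3) = sscale (-1) sone"
    by (simp add: a1_def a3_def e1_def e2_def sone_def)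
  ultimately show ?thesis by simp
qed

lemma sscale_minus_one_twoI:
  assumes "x \<in> twoI"
  shows "sscale (-1) x \<in> twoI"
proof -
  have "sscale (-1) x = smul (sscale (-1) sone) x"
    by (simp add: smul_sscale_left)
  then show ?thesis
    using assms by (simp add: minus_sone_twoI smul_twoI)
qed

lemma sref_twoI: "R \<in> twoI \<Longrightarrow> X \<in> twoI \<Longrightarrow> sref R X \<in> twoI"
  unfolding sref_def by (simp add: sscale_minus_one_twoI smul_twoI srev_twoI)

definition smul_word :: "spinor \<Rightarrow> (vec3 \<times> vec3) list \<Rightarrow> spinor" where
  "smul_word = foldl (\<lambda>y (a, b). smul y (vmul a b))"

lemma smul_word_Nil [simp]: "smul_word x [] = x"
  and smul_word_Cons [simp]: "smul_word x ((a, b) # w) = smul_word (smul x (vmul a b)) w"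
  by (simp_all add: smul_word_def)

lemma smul_word_sscale: "smul_word (sscale c x) w = sscale c (smul_word x w)"
  unfolding smul_word_def
  by (induction w arbitrary: x) (simp_all add: smul_sscale_left split: prod.split)

lemma smul_word_twoI:
  "x \<in> twoI \<Longrightarrow> set w \<subseteq> {a1, a2, a3} \<times> {a1, a2, a3} \<Longrightarrow> smul_word x w \<in> twoI"
proof (induction w arbitrary: x)
  case Nil
  then show ?case by simp
next
  case (Cons ab w)
  obtain a b where ab: "ab = (a, b)" by (rule prod.exhaust)
  have "(a, b) \<in> {a1, a2, a3} \<times> {a1, a2, a3}" and w: "set w \<subseteq> {a1, a2, a3} \<times> {a1, a2, a3}"
    using Cons.prems(2) ab by simp_all
  then have "smul x (vmul a b) \<in> twoI"
    using Cons.prems(1) by (blast intro: smul_twoI vmul_twoI)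
  then have "smul_word (smul x (vmul a b)) w \<in> twoI"
    using w by (rule Cons.IH)
  then show ?case by (simp add: ab)
qed

section \<open>Exact arithmetic in \<open>\<int>[\<tau>]\<close>\<close>

type_synonym ztau = "int \<times> int"

fun real_of_ztau :: "ztau \<Rightarrow> real" where
  "real_of_ztau (a, b) = of_int a + of_int b * tau"

fun zt_add :: "ztau \<Rightarrow> ztau \<Rightarrow> ztau" where
  "zt_add (a, b) (c, d) = (a + c, b + d)"

fun zt_sub :: "ztau \<Rightarrow> ztau \<Rightarrow> ztau" where
  "zt_sub (a, b) (c, d) = (a - c, b - d)"

fun zt_mul :: "ztau \<Rightarrow> ztau \<Rightarrow> ztau" where
  "zt_mul (a, b) (c, d) = (a * c + b * d, a * d + b * c + b * d)"

fun zt_scale :: "int \<Rightarrow> ztau \<Rightarrow> ztau" where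
  "zt_scale k (a, b) = (k * a, k * b)"

lemma tau_squared: "tau * tau = tau + 1"
  by (simp add: tau_def field_simps)

lemma sigma_eq: "sigma = 1 - tau"
  by (simp add: sigma_def tau_def field_simps)

lemma real_of_ztau_add [simp]: "real_of_ztau (zt_add x y) = real_of_ztau x + real_of_ztau y"
  by (cases x; cases y) (simp add: algebra_simps)

lemma real_of_ztau_sub [simp]: "real_of_ztau (zt_sub x y) = real_of_ztau x - real_of_ztau y"
  by (cases x; cases y) (simp add: algebra_simps)

lemma real_of_ztau_scale [simp]: "real_of_ztau (zt_scale k x) = of_int k * real_of_ztau x"
  by (cases x) (simp add: algebra_simps)

lemma real_of_ztau_mul [simp]: "real_of_ztau (zt_mul x y) = real_of_ztau x * real_of_ztau y"
proof (cases x; cases y)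
  fix a b c d assume xy: "x = (a, b)" "y = (c, d)"
  have "real_of_ztau x * real_of_ztau y = a * c + (a * d + b * c) * tau + b * d * (tau * tau)"
    by (simp add: xy algebra_simps)
  also have "\<dots> = real_of_ztau (zt_mul x y)"
    by (simp add: xy tau_squared algebra_simps)
  finally show ?thesis ..
qed

datatype zspinor = ZSp ztau ztau ztau ztau

fun spinor_of :: "zspinor \<Rightarrow> spinor" where
  "spinor_of (ZSp a b c d) =
     Sp (real_of_ztau a) (real_of_ztau b) (real_of_ztau c) (real_of_ztau d)"

fun zsmul :: "zspinor \<Rightarrow> zspinor \<Rightarrow> zspinor" where
  "zsmul (ZSp a v1 v2 v3) (ZSp b w1 w2 w3) =
     ZSp (zt_sub (zt_mul a b) (zt_add (zt_add (zt_mul v1 w1) (zt_mul v2 w2)) (zt_mul v3 w3)))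
         (zt_sub (zt_add (zt_mul a w1) (zt_mul b v1)) (zt_sub (zt_mul v2 w3) (zt_mul v3 w2)))
         (zt_sub (zt_add (zt_mul a w2) (zt_mul b v2)) (zt_sub (zt_mul v3 w1) (zt_mul v1 w3)))
         (zt_sub (zt_add (zt_mul a w3) (zt_mul b v3)) (zt_sub (zt_mul v1 w2) (zt_mul v2 w1)))"

fun zsscale :: "int \<Rightarrow> zspinor \<Rightarrow> zspinor" where
  "zsscale k (ZSp a b c d) = ZSp (zt_scale k a) (zt_scale k b) (zt_scale k c) (zt_scale k d)"

fun zsrev :: "zspinor \<Rightarrow> zspinor" where
  "zsrev (ZSp a b c d) = ZSp a (zt_scale (-1) b) (zt_scale (-1) c) (zt_scale (-1) d)"

definition zsone :: zspinor where
  "zsone = ZSp (1, 0) (0, 0) (0, 0) (0, 0)"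

definition zsref :: "zspinor \<Rightarrow> zspinor \<Rightarrow> zspinor" where
  "zsref R X = zsscale (-1) (zsmul (zsmul R (zsrev X)) R)"

lemma spinor_of_zsmul [simp]: "spinor_of (zsmul x y) = smul (spinor_of x) (spinor_of y)"
  by (cases x; cases y) simp

lemma spinor_of_zsscale [simp]: "spinor_of (zsscale k x) = sscale (of_int k) (spinor_of x)"
  by (cases x) simp

lemma spinor_of_zsrev [simp]: "spinor_of (zsrev x) = srev (spinor_of x)"
  by (cases x) simp

lemma spinor_of_zsone [simp]: "spinor_of zsone = sone"
  by (simp add: zsone_def sone_def)

lemma spinor_of_zsref [simp]: "spinor_of (zsref R X) = sref (spinor_of R) (spinor_of X)"
  by (simp add: zsref_def sref_def)

text \<open>
  The simple roots and the elements of \<open>\<Psi>\<close> have coordinates in \<open>\<onehalf>\<int>[\<tau>]\<close>; they are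
  stored doubled and recovered by \<open>half_vec\<close> and \<open>half_spinor\<close>.
\<close>

definition half_spinor :: "zspinor \<Rightarrow> spinor" where
  "half_spinor p = sscale (1 / 2) (spinor_of p)"

type_synonym zvec = "ztau \<times> ztau \<times> ztau"

fun half_vec :: "zvec \<Rightarrow> vec3" where
  "half_vec (x, y, z) = (real_of_ztau x / 2, real_of_ztau y / 2, real_of_ztau z / 2)"

fun zvmul :: "zvec \<Rightarrow> zvec \<Rightarrow> zspinor" where
  "zvmul (x1, x2, x3) (y1, y2, y3) =
     ZSp (zt_add (zt_add (zt_mul x1 y1) (zt_mul x2 y2)) (zt_mul x3 y3))
         (zt_sub (zt_mul x2 y3) (zt_mul x3 y2))
         (zt_sub (zt_mul x3 y1) (zt_mul x1 y3))
         (zt_sub (zt_mul x1 y2) (zt_mul x2 y1))"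

lemma spinor_of_zvmul: "spinor_of (zvmul a b) = sscale 4 (vmul (half_vec a) (half_vec b))"
  by (cases a rule: prod_cases3; cases b rule: prod_cases3) (simp add: algebra_simps)

definition za1 :: zvec where "za1 = ((0, 0), (2, 0), (0, 0))"
definition za2 :: zvec where "za2 = ((0, -1), (-1, 0), (1, -1))"
definition za3 :: zvec where "za3 = ((2, 0), (0, 0), (0, 0))"

lemma half_vec_za: "half_vec za1 = a1" "half_vec za2 = a2" "half_vec za3 = a3"
  by (simp_all add: za1_def za2_def za3_def a1_def a2_def a3_def e1_def e2_def field_simps)

definition zsmul_word :: "zspinor \<Rightarrow> (zvec \<times> zvec) list \<Rightarrow> zspinor" where
  "zsmul_word = foldl (\<lambda>y (a, b). zsmul y (zvmul a b))"

lemma zsmul_word_Nil [simp]: "zsmul_word x [] = x"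
  and zsmul_word_Cons [simp]: "zsmul_word x ((a, b) # w) = zsmul_word (zsmul x (zvmul a b)) w"
  by (simp_all add: zsmul_word_def)

lemma spinor_of_zsmul_word:
  "spinor_of (zsmul_word x w) =
    sscale (4 ^ length w) (smul_word (spinor_of x) (map (map_prod half_vec half_vec) w))"
proof (induction w arbitrary: x)
  case Nil
  show ?case by simp
next
  case (Cons ab w)
  obtain a b where ab: "ab = (a, b)" by (rule prod.exhaust)
  have "spinor_of (zsmul x (zvmul a b)) =
      sscale 4 (smul (spinor_of x) (vmul (half_vec a) (half_vec b)))"
    by (simp add: spinor_of_zvmul smul_sscale_right del: zvmul.simps half_vec.simps)
  then show ?case
    by (simp add: ab Cons.IH smul_word_sscale sscale_sscale mult.commute del: spinor_of_zsmul)
qed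

lemma smul_word_eq_half_spinor:
  assumes "zsscale 2 (zsmul_word zsone w) = zsscale (4 ^ length w) p"
  shows "smul_word sone (map (map_prod half_vec half_vec) w) = half_spinor p"
proof -
  let ?F = "smul_word sone (map (map_prod half_vec half_vec) w)"
  have "sscale (4 ^ length w) (sscale 2 ?F) = sscale (4 ^ length w) (spinor_of p)"
    using arg_cong [OF assms, of spinor_of]
    by (simp add: spinor_of_zsmul_word sscale_sscale mult.commute)
  then have doubled: "sscale 2 ?F = spinor_of p"
    by (subst (asm) sscale_cancel) simp_all
  have "?F = sscale (1 / 2) (sscale 2 ?F)"
    by (simp add: sscale_sscale)
  also have "\<dots> = half_spinor p"
    by (simp only: doubled half_spinor_def)
  finally show ?thesis .
qed

definition zpsi_pure :: "zspinor list" where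
  "zpsi_pure = [
    ZSp (2, 0) (0, 0) (0, 0) (0, 0),
    ZSp (0, 0) (1, 0) (-1, 1) (0, 1),
    ZSp (0, 0) (1, -1) (0, 1) (1, 0),
    ZSp (0, 0) (0, -1) (1, 0) (1, -1)]"

definition zpsi_mixed :: "zspinor list" where
  "zpsi_mixed = [
    ZSp (1, 0) (1, -1) (0, 0) (0, 1),
    ZSp (1, 0) (-1, 1) (0, 0) (0, -1),
    ZSp (1, 0) (0, 1) (-1, 1) (0, 0),
    ZSp (1, 0) (0, -1) (1, -1) (0, 0),
    ZSp (1, 0) (0, 0) (0, 1) (1, -1),
    ZSp (1, 0) (0, 0) (0, -1) (-1, 1)]"

definition zpsi_pos :: "zspinor list" where
  "zpsi_pos = zpsi_pure @ zpsi_mixed"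

definition zpsi :: "zspinor list" where
  "zpsi = zpsi_pos @ map (zsscale (-1)) zpsi_pos"

definition zpsi_pos_words :: "(zvec \<times> zvec) list list" where
  "zpsi_pos_words = [
    [],
    [(za1, za3), (za2, za1), (za3, za2), (za3, za1)],
    [(za1, za2), (za3, za2), (za3, za1), (za2, za3), (za2, za1)],
    [(za3, za2), (za1, za3), (za2, za1), (za3, za2), (za1, za3), (za2, za3)],
    [(za2, za3), (za1, za3)],
    [(za3, za1), (za3, za2)],
    [(za1, za2), (za1, za3), (za2, za1), (za3, za2), (za3, za2)],
    [(za2, za3), (za2, za1), (za3, za2), (za1, za3), (za2, za1)],
    [(za2, za1), (za3, za2), (za3, za1), (za2, za3)],
    [(za3, za2), (za1, za3), (za2, za3), (za1, za2)]]"

lemma zpsi_pure_zsref_closed: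
  "\<forall>R \<in> set zpsi_pure. \<forall>X \<in> set zpsi_pos. zsref R X \<in> zsscale 4 ` set zpsi"
  by (simp add: zpsi_def zpsi_pos_def zpsi_pure_def zpsi_mixed_def zsref_def)

lemma zpsi_mixed_zsref_closed:
  "\<forall>R \<in> set zpsi_mixed. \<forall>X \<in> set zpsi_pos. zsref R X \<in> zsscale 4 ` set zpsi"
  by (simp add: zpsi_def zpsi_pos_def zpsi_pure_def zpsi_mixed_def zsref_def)

lemma zpsi_pos_zsref_closed:
  "\<forall>R \<in> set zpsi_pos. \<forall>X \<in> set zpsi_pos. zsref R X \<in> zsscale 4 ` set zpsi"
  using zpsi_pure_zsref_closed zpsi_mixed_zsref_closed by (simp add: zpsi_pos_def ball_Un)

lemma zpsi_pos_unit: "\<forall>R \<in> set zpsi_pos. zsmul R (zsrev R) = zsscale 4 zsone"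
  by (simp add: zpsi_pos_def zpsi_pure_def zpsi_mixed_def zsone_def)

lemma zpsi_pos_words_letters:
  "\<forall>w \<in> set zpsi_pos_words. set w \<subseteq> {za1, za2, za3} \<times> {za1, za2, za3}"
  by (simp add: zpsi_pos_words_def)

lemma zpsi_pos_words:
  "list_all2 (\<lambda>p w. zsscale 2 (zsmul_word zsone w) = zsscale (4 ^ length w) p)
     zpsi_pos zpsi_pos_words"
  by (simp add: zpsi_pos_def zpsi_pure_def zpsi_mixed_def zpsi_pos_words_def
      za1_def za2_def za3_def zsone_def)

section \<open>The root system \<open>\<Psi>\<close>\<close>

lemma setcompr3_eq_image:
  "{f a b c | a b c. a \<in> A \<and> b \<in> B \<and> c \<in> C} = (\<lambda>(a, b, c). f a b c) ` (A \<times> B \<times> C)"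
  by force

lemma half_spinor_zsscale: "half_spinor (zsscale k p) = sscale (of_int k) (half_spinor p)"
  by (simp add: half_spinor_def sscale_sscale mult.commute)

lemma Psi_eq: "Psi = half_spinor ` set zpsi"
  unfolding Psi_def setcompr_eq_image setcompr3_eq_image Collect_mem_eq
  by (simp add: half_spinor_def zpsi_def zpsi_pos_def zpsi_pure_def zpsi_mixed_def
      e12_def e13_def e23_def e1_def e2_def e3_def sone_def sigma_eq insert_commute)

lemma Psi_eq_pos_neg:
  "Psi = half_spinor ` set zpsi_pos \<union> sscale (-1) ` half_spinor ` set zpsi_pos"
  by (simp add: Psi_eq zpsi_def image_Un image_image half_spinor_zsscale)

lemma Psi_cases:
  assumes "X \<in> Psi"
  obtains X0 c where "X0 \<in> set zpsi_pos" and "X = sscale c (half_spinor X0)" and "c \<in> {1, -1}"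
proof -
  consider "X \<in> half_spinor ` set zpsi_pos" | "X \<in> sscale (-1) ` half_spinor ` set zpsi_pos"
    using assms unfolding Psi_eq_pos_neg by blast
  then show thesis
  proof cases
    case 1
    then obtain X0 where "X0 \<in> set zpsi_pos" and "X = half_spinor X0" by blast
    then show thesis using that [of X0 1] by simp
  next
    case 2
    then obtain X0 where "X0 \<in> set zpsi_pos" and "X = sscale (-1) (half_spinor X0)" by blast
    then show thesis using that [of X0 "-1"] by simp
  qed
qed

lemma signed_half_spinor_Psi:
  assumes "c \<in> {1, -1}" and "X0 \<in> set zpsi_pos"
  shows "sscale c (half_spinor X0) \<in> Psi"
  using assms unfolding Psi_eq_pos_neg by auto

lemma sscale_minus_one_Psi:
  assumes "X \<in> Psi"
  shows "sscale (-1) X \<in> Psi"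
proof -
  obtain X0 c where "X0 \<in> set zpsi_pos" and "X = sscale c (half_spinor X0)" and "c \<in> {1, -1}"
    using assms by (rule Psi_cases)
  then show ?thesis
    using signed_half_spinor_Psi [of "- c" X0] by (auto simp: sscale_sscale)
qed

lemma Psi_sref_closed_pos:
  assumes "R \<in> set zpsi_pos" and "X \<in> set zpsi_pos"
  shows "sref (half_spinor R) (half_spinor X) \<in> Psi"
proof -
  obtain T where T: "T \<in> set zpsi" "zsref R X = zsscale 4 T"
    using assms zpsi_pos_zsref_closed by blast
  have "sref (half_spinor R) (half_spinor X) = sscale (1 / 8) (spinor_of (zsref R X))"
    by (simp add: half_spinor_def sref_sscale_left sref_sscale_right sscale_sscale)
  also have "\<dots> = half_spinor T"
    by (simp add: T half_spinor_def sscale_sscale)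
  finally show ?thesis
    using T by (simp add: Psi_eq)
qed

lemma Psi_sref_closed:
  assumes "R \<in> Psi" and "X \<in> Psi"
  shows "sref R X \<in> Psi"
proof -
  obtain R0 c where R: "R0 \<in> set zpsi_pos" "R = sscale c (half_spinor R0)" "c \<in> {1, -1}"
    using assms(1) by (rule Psi_cases)
  obtain X0 d where X: "X0 \<in> set zpsi_pos" "X = sscale d (half_spinor X0)" "d \<in> {1, -1}"
    using assms(2) by (rule Psi_cases)
  have "c * c = 1" using R(3) by auto
  then have "sref R X = sscale d (sref (half_spinor R0) (half_spinor X0))"
    by (simp add: R X sref_sscale_left sref_sscale_right)
  then show ?thesis
    using X(3) Psi_sref_closed_pos [OF R(1) X(1)] sscale_minus_one_Psi by auto
qed

lemma Psi_unit:
  assumes "R \<in> Psi"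
  shows "smul R (srev R) = sone"
proof -
  obtain R0 c where R: "R0 \<in> set zpsi_pos" "R = sscale c (half_spinor R0)" "c \<in> {1, -1}"
    using assms by (rule Psi_cases)
  have "c * c = 1" using R(3) by auto
  then have "smul R (srev R) = sscale (1 / 4) (spinor_of (zsmul R0 (zsrev R0)))"
    by (simp add: R half_spinor_def smul_srev_sscale srev_sscale smul_sscale_left
        smul_sscale_right sscale_sscale)
  also have "\<dots> = sone"
    using zpsi_pos_unit R(1) by (simp add: sscale_sscale)
  finally show ?thesis .
qed

lemma half_spinor_zpsi_pos_twoI:
  assumes "p \<in> set zpsi_pos"
  shows "half_spinor p \<in> twoI"
proof -
  obtain i where i: "i < length zpsi_pos" "p = zpsi_pos ! i"
    using assms by (auto simp: in_set_conv_nth)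
  define w where "w = zpsi_pos_words ! i"
  have "w \<in> set zpsi_pos_words"
    using i zpsi_pos_words by (simp add: w_def list_all2_lengthD)
  then have letters: "set w \<subseteq> {za1, za2, za3} \<times> {za1, za2, za3}"
    using zpsi_pos_words_letters by blast
  have eq: "zsscale 2 (zsmul_word zsone w) = zsscale (4 ^ length w) p"
    using i zpsi_pos_words by (simp add: w_def list_all2_conv_all_nth)
  let ?w = "map (map_prod half_vec half_vec) w"
  have "set ?w \<subseteq> map_prod half_vec half_vec ` ({za1, za2, za3} \<times> {za1, za2, za3})"
    unfolding set_map by (rule image_mono [OF letters])
  then have "set ?w \<subseteq> {a1, a2, a3} \<times> {a1, a2, a3}"
    by (simp add: map_prod_surj_on half_vec_za)
  then have "smul_word sone ?w \<in> twoI"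
    by (rule smul_word_twoI [OF twoI.one])
  then show ?thesis
    by (simp add: smul_word_eq_half_spinor [OF eq])
qed

lemma Psi_subset_twoI: "Psi \<subseteq> twoI"
proof
  fix X assume "X \<in> Psi"
  then obtain X0 c where X0: "X0 \<in> set zpsi_pos"
    and X: "X = sscale c (half_spinor X0)" and c: "c \<in> {1, -1}"
    by (rule Psi_cases)
  have "half_spinor X0 \<in> twoI"
    using X0 by (rule half_spinor_zpsi_pos_twoI)
  then show "X \<in> twoI"
    using X c sscale_minus_one_twoI by auto
qed

lemma sref_Psi_image:
  assumes "R \<in> Psi"
  shows "sref R ` Psi = Psi" and "sref R ` Cset = Cset"
proof -
  have inv: "\<And>X. sref R (sref R X) = X"
    using assms by (simp add: Psi_unit sref_sref)
  have Psi: "sref R ` Psi \<subseteq> Psi"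
    using assms Psi_sref_closed by blast
  have twoI: "sref R ` twoI \<subseteq> twoI"
    using assms Psi_subset_twoI sref_twoI by blast
  show "sref R ` Psi = Psi"
    using involution_image_eq [OF inv Psi] .
  show "sref R ` Cset = Cset"
    unfolding Cset_def using involution_image_Diff_eq [OF inv twoI Psi] .
qed

theorem mainTheorem10:
  shows "\<forall>g \<in> A4grp. g ` Psi = Psi \<and> g ` Cset = Cset"
proof
  fix g assume "g \<in> A4grp"
  then show "g ` Psi = Psi \<and> g ` Cset = Cset"
  proof (induction g rule: A4grp.induct)
    case idI
    show ?case by simp
  next
    case (compI g R)
    then show ?case by (simp only: image_comp [symmetric] sref_Psi_image)
  qed
qed

end
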